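(* Let $F$ be a graph of diameter $2$, $n=|V(F)|$, $t=\delta(F)$, and let $l>n$ be an integer. Then $f_{2l}\le n!\,C_{l-1}^{n-t-1}$.
   Context: All graphs are simple, finite, undirected. The $F$-degree of a vertex $v$ in $G$ is the number of subgraphs of $G$ (not necessarily induced) isomorphic to $F$ and containing $v$. $A_{2l-1}$ is the graph with vertex set $\{1,\dots,2l-1\}$ in which distinct $i,j$ are adjacent iff $|i-j|\le l-1$; $F_{2l}$ is obtained from $A_{2l-1}$ by adding a new vertex $2l$ joined exactly to $1,\dots,t$. $f_{2l}$ is the $F$-degree of vertex $2l$ in $F_{2l}$. $C_m^k=\frac{m!}{k!(m-k)!}$ for integers $m\ge k\ge 0$, and $C_m^k=0$ otherwise. *)

theory Defs
  imports Main "HOL-Library.Extended_Nat"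
begin

definition simple_graph :: "'a set \<Rightarrow> 'a set set \<Rightarrow> bool" where
  "simple_graph V E \<longleftrightarrow> finite V \<and> (\<forall>e\<in>E. e \<subseteq> V \<and> card e = 2)"

definition degree :: "'a set \<Rightarrow> 'a set set \<Rightarrow> 'a \<Rightarrow> nat" where
  "degree V E v = card {u \<in> V. {u, v} \<in> E}"

definition min_degree :: "'a set \<Rightarrow> 'a set set \<Rightarrow> nat" where
  "min_degree V E = Min (degree V E ` V)"

definition is_walk :: "'a set \<Rightarrow> 'a set set \<Rightarrow> 'a list \<Rightarrow> bool" where
  "is_walk V E xs \<longleftrightarrow> xs \<noteq> [] \<and> set xs \<subseteq> V \<and>
     (\<forall>i. Suc i < length xs \<longrightarrow> {xs ! i, xs ! Suc i} \<in> E)"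

definition gdist :: "'a set \<Rightarrow> 'a set set \<Rightarrow> 'a \<Rightarrow> 'a \<Rightarrow> enat" where
  "gdist V E x y = Inf {enat (length xs - 1) | xs. is_walk V E xs \<and> hd xs = x \<and> last xs = y}"

definition diameter :: "'a set \<Rightarrow> 'a set set \<Rightarrow> enat" where
  "diameter V E = Sup {gdist V E x y | x y. x \<in> V \<and> y \<in> V}"

definition graph_iso :: "'a set \<Rightarrow> 'a set set \<Rightarrow> 'b set \<Rightarrow> 'b set set \<Rightarrow> bool" where
  "graph_iso V1 E1 V2 E2 \<longleftrightarrow> (\<exists>f. bij_betw f V1 V2 \<and>
     (\<forall>x\<in>V1. \<forall>y\<in>V1. {x, y} \<in> E1 \<longleftrightarrow> {f x, f y} \<in> E2))"

text \<open>F-degree of v in G: number of (not necessarily induced) subgraphs (W,D) of G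
  isomorphic to F with v \<in> W.\<close>
definition F_degree :: "'b set \<Rightarrow> 'b set set \<Rightarrow> 'a set \<Rightarrow> 'a set set \<Rightarrow> 'a \<Rightarrow> nat" where
  "F_degree VF EF V E v = card {(W, D). W \<subseteq> V \<and> D \<subseteq> E \<and> (\<forall>e\<in>D. e \<subseteq> W) \<and> v \<in> W
      \<and> graph_iso W D VF EF}"

definition A_V :: "nat \<Rightarrow> nat set" where
  "A_V l = {1..2*l-1}"

definition A_E :: "nat \<Rightarrow> nat set set" where
  "A_E l = {{i, j} | i j. i \<in> A_V l \<and> j \<in> A_V l \<and> i \<noteq> j \<and>
                          \<bar>int i - int j\<bar> \<le> int l - 1}"

definition FF_V :: "nat \<Rightarrow> nat set" where
  "FF_V l = {1..2*l}"

definition FF_E :: "nat \<Rightarrow> nat \<Rightarrow> nat set set" where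
  "FF_E l t = A_E l \<union> {{2*l, i} | i. 1 \<le> i \<and> i \<le> t}"

end

(* In a copy (W, D) of F in F_2l containing 2l, the vertex 2l can only be adjacent to 1, ..., t,
   and it has degree at least t = delta(F); so its neighbours are exactly 1, ..., t. Because F has
   diameter 2, every other vertex of W is adjacent to one of them and hence lies in {t+1, ..., t+l-1}.
   Thus W is {1, ..., t, 2l} together with an (n-t-1)-subset of an (l-1)-set, and for fixed W the
   edge set D is the pullback of E(F) along one of the n! bijections W -> V(F). *)

theory Submission
  imports Defs "HOL-Combinatorics.Permutations"
begin

lemma simple_graph_subgraph:
  assumes "simple_graph V E" "W \<subseteq> V" "D \<subseteq> E" "\<forall>e\<in>D. e \<subseteq> W"
  shows "simple_graph W D"
  using assms unfolding simple_graph_def by (auto intro: finite_subset)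

lemma finite_simple_graph_edge_sets: "finite {D. simple_graph W D}"
proof (cases "finite W")
  case True
  have "{D. simple_graph W D} \<subseteq> Pow (Pow W)"
    by (auto simp: simple_graph_def)
  with True show ?thesis
    by (simp add: finite_subset)
qed (simp add: simple_graph_def)

lemma min_degree_le_degree:
  assumes "finite V" "v \<in> V"
  shows "min_degree V E \<le> degree V E v"
  unfolding min_degree_def using assms by (auto intro: Min_le)

lemma degree_le_card:
  assumes "finite V"
  shows "degree V E v \<le> card V"
  unfolding degree_def using assms by (intro card_mono) auto

lemma min_degree_le_card:
  assumes "finite V" "V \<noteq> {}"
  shows "min_degree V E \<le> card V"
proof -
  obtain v where "v \<in> V"
    using assms(2) by blast
  then show ?thesis
    using min_degree_le_degree[OF assms(1)] degree_le_card[OF assms(1)] le_trans by metis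
qed

lemma diameter_ne_0_imp_nonempty:
  assumes "diameter V E \<noteq> 0"
  shows "V \<noteq> {}"
  using assms unfolding diameter_def by (auto simp: bot_enat_def)

lemma gdist_le_diameter:
  assumes "a \<in> V" "b \<in> V"
  shows "gdist V E a b \<le> diameter V E"
  unfolding diameter_def using assms by (intro Sup_upper) blast

lemma gdist_le_imp_walk:
  assumes "gdist V E a b \<le> enat k"
  obtains xs where "is_walk V E xs" "hd xs = a" "last xs = b" "length xs \<le> Suc k"
proof -
  let ?L = "{enat (length xs - 1) | xs. is_walk V E xs \<and> hd xs = a \<and> last xs = b}"
  have "?L \<noteq> {}"
  proof
    assume "?L = {}"
    then have "gdist V E a b = \<infinity>"
      unfolding gdist_def by (simp add: Inf_enat_def)
    with assms show False by simp
  qed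
  then have "Inf ?L \<in> ?L"
    unfolding Inf_enat_def by (auto intro: LeastI)
  then obtain xs where xs: "is_walk V E xs" "hd xs = a" "last xs = b"
    and "gdist V E a b = enat (length xs - 1)"
    unfolding gdist_def by blast
  with assms have "length xs \<le> Suc k" by simp
  with xs that show thesis by blast
qed

lemma walk_le_3_adjacent_or_common_neighbour:
  assumes "is_walk V E xs" "hd xs = a" "last xs = b" "length xs \<le> 3" "a \<noteq> b"
  shows "{a, b} \<in> E \<or> (\<exists>m\<in>V. {a, m} \<in> E \<and> {m, b} \<in> E)"
proof -
  have "xs \<noteq> []" and "set xs \<subseteq> V"
    and step: "\<And>i. Suc i < length xs \<Longrightarrow> {xs ! i, xs ! Suc i} \<in> E"
    using assms(1) unfolding is_walk_def by auto
  moreover have "xs ! 0 = a" "xs ! (length xs - 1) = b"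
    using assms(2,3) \<open>xs \<noteq> []\<close> by (simp_all add: hd_conv_nth last_conv_nth)
  moreover have "length xs \<noteq> 0"
    using \<open>xs \<noteq> []\<close> by simp
  ultimately consider "length xs = 1" | "length xs = 2" | "length xs = 3"
    using assms(4) by linarith
  then show ?thesis
  proof cases
    case 3
    then show ?thesis
      using step[of 0] step[of 1] \<open>set xs \<subseteq> V\<close> \<open>xs ! 0 = a\<close> \<open>xs ! (length xs - 1) = b\<close>
      by (auto simp: numeral_2_eq_2 subset_iff)
  qed (use step[of 0] \<open>xs ! 0 = a\<close> \<open>xs ! (length xs - 1) = b\<close> assms(5) in auto)
qed

lemma diameter_le_2_adjacent_or_common_neighbour:
  assumes "diameter V E \<le> 2" "a \<in> V" "b \<in> V" "a \<noteq> b"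
  shows "{a, b} \<in> E \<or> (\<exists>m\<in>V. {a, m} \<in> E \<and> {m, b} \<in> E)"
proof -
  have "gdist V E a b \<le> 2"
    using gdist_le_diameter[OF assms(2,3), of E] assms(1) by (rule order_trans)
  then have "gdist V E a b \<le> enat 2"
    by (simp add: enat_numeral)
  then obtain xs where "is_walk V E xs" "hd xs = a" "last xs = b" "length xs \<le> 3"
    by (rule gdist_le_imp_walk) simp
  then show ?thesis
    using assms(4) by (rule walk_le_3_adjacent_or_common_neighbour)
qed

lemma graph_iso_min_degree_le_degree:
  assumes "graph_iso W D VF EF" "finite VF" "v \<in> W"
  shows "min_degree VF EF \<le> degree W D v"
proof -
  obtain f where "bij_betw f W VF"
    and iso: "\<forall>x\<in>W. \<forall>y\<in>W. {x, y} \<in> D \<longleftrightarrow> {f x, f y} \<in> EF"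
    using assms(1) unfolding graph_iso_def by blast
  then have "inj_on f W" and f_W: "f ` W = VF"
    by (auto simp: bij_betw_def)
  have "f ` {u \<in> W. {u, v} \<in> D} = {u \<in> VF. {u, f v} \<in> EF}"
    using iso assms(3) f_W by auto
  then have "degree VF EF (f v) = degree W D v"
    unfolding degree_def using \<open>inj_on f W\<close> by (metis (no_types, lifting) card_image inj_on_subset mem_Collect_eq subsetI)
  then show ?thesis
    using min_degree_le_degree[OF assms(2), of "f v" EF] f_W assms(3) by auto
qed

lemma graph_iso_adjacent_or_common_neighbour:
  assumes "graph_iso W D VF EF" "diameter VF EF \<le> 2" "a \<in> W" "b \<in> W" "a \<noteq> b"
  shows "{a, b} \<in> D \<or> (\<exists>m\<in>W. {a, m} \<in> D \<and> {m, b} \<in> D)"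
proof -
  obtain f where "bij_betw f W VF"
    and iso: "\<forall>x\<in>W. \<forall>y\<in>W. {x, y} \<in> D \<longleftrightarrow> {f x, f y} \<in> EF"
    using assms(1) unfolding graph_iso_def by blast
  then have "inj_on f W" and f_W: "f ` W = VF"
    by (auto simp: bij_betw_def)
  then have "f a \<in> VF" "f b \<in> VF" "f a \<noteq> f b"
    using assms(3-5) by (auto simp: inj_on_def)
  with assms(2) consider "{f a, f b} \<in> EF" | m where "m \<in> VF" "{f a, m} \<in> EF" "{m, f b} \<in> EF"
    by (meson diameter_le_2_adjacent_or_common_neighbour)
  then show ?thesis
  proof cases
    case 1
    then show ?thesis
      using iso assms(3,4) by simp
  next
    case (2 m)
    then obtain w where "w \<in> W" "m = f w"
      using f_W by blast
    then show ?thesis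
      using 2 iso assms(3,4) by auto
  qed
qed

lemma simple_graph_FF:
  assumes "t < 2 * l"
  shows "simple_graph (FF_V l) (FF_E l t)"
  using assms unfolding simple_graph_def FF_V_def FF_E_def A_E_def A_V_def
  by (fastforce simp: card_2_iff)

lemma doubleton_2l_in_FF_E_iff:
  assumes "t < 2 * l"
  shows "{x, 2 * l} \<in> FF_E l t \<longleftrightarrow> x \<in> {1..t}"
  using assms unfolding FF_E_def A_E_def A_V_def by (auto simp: doubleton_eq_iff)

lemma FF_E_neighbour_less:
  assumes "{w, x} \<in> FF_E l t" "x \<le> t" "t < 2 * l" "w \<noteq> 2 * l"
  shows "w < t + l"
  using assms unfolding FF_E_def A_E_def A_V_def by (auto simp: doubleton_eq_iff)

lemma FF_copy_vertices_eq:
  assumes "finite VF" "diameter VF EF \<le> 2" "t = min_degree VF EF" "t < l"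
    and W: "W \<subseteq> FF_V l" and D: "D \<subseteq> FF_E l t" and "2 * l \<in> W"
    and iso: "graph_iso W D VF EF"
  shows "W = {1..t} \<union> {2 * l} \<union> (W \<inter> {t+1..<t+l})"
proof -
  define N where "N = {u \<in> W. {u, 2 * l} \<in> D}"
  have "N \<subseteq> {1..t}"
    using D doubleton_2l_in_FF_E_iff[of t l] \<open>t < l\<close> unfolding N_def by auto
  moreover have "finite N"
    using W unfolding N_def FF_V_def by (auto intro: finite_subset)
  moreover have "card {1..t} \<le> card N"
    using graph_iso_min_degree_le_degree[OF iso \<open>finite VF\<close> \<open>2 * l \<in> W\<close>] assms(3)
    unfolding degree_def N_def by simp
  ultimately have N_eq: "N = {1..t}"
    using card_seteq by blast
  have "w \<in> {t+1..<t+l}" if "w \<in> W" and w_low: "w \<notin> {1..t}" and w_ne: "w \<noteq> 2 * l" for w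
  proof -
    have "w \<notin> N"
      using w_low N_eq by simp
    then obtain m where "m \<in> N" "{w, m} \<in> D"
      using graph_iso_adjacent_or_common_neighbour[OF iso assms(2) \<open>w \<in> W\<close> \<open>2 * l \<in> W\<close> w_ne] \<open>w \<in> W\<close>
      unfolding N_def by blast
    then have "w < t + l"
      using FF_E_neighbour_less[of w m l t] D N_eq \<open>t < l\<close> w_ne by auto
    moreover have "1 \<le> w"
      using W \<open>w \<in> W\<close> unfolding FF_V_def by auto
    ultimately show ?thesis
      using w_low by simp
  qed
  then show ?thesis
    using N_eq \<open>2 * l \<in> W\<close> unfolding N_def by blast
qed

definition FF_vertex_sets :: "nat \<Rightarrow> nat \<Rightarrow> nat \<Rightarrow> nat set set" where
  "FF_vertex_sets l t k = (\<lambda>X. {1..t} \<union> {2 * l} \<union> X) ` {X. X \<subseteq> {t+1..<t+l} \<and> card X = k}"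

lemma finite_FF_vertex_sets: "finite (FF_vertex_sets l t k)"
  unfolding FF_vertex_sets_def by simp

lemma card_FF_vertex_sets_le: "card (FF_vertex_sets l t k) \<le> (l - 1) choose k"
proof -
  have "card (FF_vertex_sets l t k) \<le> card {X. X \<subseteq> {t+1..<t+l} \<and> card X = k}"
    unfolding FF_vertex_sets_def by (rule card_image_le) simp
  also have "\<dots> = (l - 1) choose k"
    by (subst n_subsets) simp_all
  finally show ?thesis .
qed

lemma FF_copy_through_2l:
  assumes "finite VF" "diameter VF EF \<le> 2" "t = min_degree VF EF" "t < l"
    and W: "W \<subseteq> FF_V l" and D: "D \<subseteq> FF_E l t" "\<forall>e\<in>D. e \<subseteq> W"
    and "2 * l \<in> W" and iso: "graph_iso W D VF EF"
  shows "W \<in> FF_vertex_sets l t (card VF - t - 1) \<and> simple_graph W D"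
proof
  let ?X = "W \<inter> {t+1..<t+l}"
  have W_eq: "W = {1..t} \<union> {2 * l} \<union> ?X"
    using FF_copy_vertices_eq[OF assms(1-4) W D(1) \<open>2 * l \<in> W\<close> iso] .
  have "card W = card VF"
    using iso unfolding graph_iso_def by (metis bij_betw_same_card)
  moreover have "card W = card ({1..t} \<union> {2 * l} \<union> ?X)"
    using arg_cong[OF W_eq, of card] .
  moreover have "card ({1..t} \<union> {2 * l} \<union> ?X) = card ({1..t} \<union> {2 * l}) + card ?X"
    using \<open>t < l\<close> by (intro card_Un_disjoint) auto
  moreover have "card ({1..t} \<union> {2 * l}) = t + 1"
    using \<open>t < l\<close> by simp
  ultimately have "card ?X = card VF - t - 1"
    by simp
  then show "W \<in> FF_vertex_sets l t (card VF - t - 1)"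
    unfolding FF_vertex_sets_def using W_eq by blast
  have "simple_graph (FF_V l) (FF_E l t)"
    using \<open>t < l\<close> by (intro simple_graph_FF) simp
  then show "simple_graph W D"
    using W D by (rule simple_graph_subgraph)
qed

lemma card_iso_edge_sets_le_fact:
  fixes W :: "'a set" and VF :: "'b set"
  assumes "finite VF"
  shows "card {D. simple_graph W D \<and> graph_iso W D VF EF} \<le> fact (card VF)"
proof (cases "\<exists>D. simple_graph W D \<and> graph_iso W D VF EF")
  case True
  then obtain h where h: "bij_betw h W VF"
    unfolding graph_iso_def by blast
  \<comment> \<open>every bijection \<open>W \<rightarrow> VF\<close> has the form \<open>p \<circ> h\<close> with \<open>p\<close> a permutation of \<open>VF\<close>\<close>
  define pullback where
    "pullback p = {{x, y} | x y. x \<in> W \<and> y \<in> W \<and> {p (h x), p (h y)} \<in> EF}" for p :: "'b \<Rightarrow> 'b"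
  have "{D. simple_graph W D \<and> graph_iso W D VF EF} \<subseteq> pullback ` {p. p permutes VF}"
  proof
    fix D assume "D \<in> {D. simple_graph W D \<and> graph_iso W D VF EF}"
    then have sg: "simple_graph W D" and "graph_iso W D VF EF"
      by auto
    then obtain f where f: "bij_betw f W VF"
      and iso: "\<forall>x\<in>W. \<forall>y\<in>W. {x, y} \<in> D \<longleftrightarrow> {f x, f y} \<in> EF"
      unfolding graph_iso_def by blast
    define p where "p a = (if a \<in> VF then f (inv_into W h a) else a)" for a
    have "bij_betw (f \<circ> inv_into W h) VF VF"
      using bij_betw_trans[OF bij_betw_inv_into[OF h] f] .
    then have "bij_betw p VF VF"
      by (rule bij_betw_cong[THEN iffD1, rotated]) (simp add: p_def)
    then have "p permutes VF"
      by (rule bij_imp_permutes) (simp add: p_def)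
    have p_h: "p (h x) = f x" if "x \<in> W" for x
      using that bij_betwE[OF h] inv_into_f_f[OF bij_betw_imp_inj_on[OF h]] by (simp add: p_def)
    have "D = pullback p"
    proof
      show "pullback p \<subseteq> D"
        unfolding pullback_def using iso p_h by auto
      show "D \<subseteq> pullback p"
      proof
        fix e assume "e \<in> D"
        then have "e \<subseteq> W" "card e = 2"
          using sg unfolding simple_graph_def by auto
        then obtain x y where "e = {x, y}" "x \<in> W" "y \<in> W"
          by (metis card_2_iff insert_subset)
        moreover from calculation \<open>e \<in> D\<close> have "{p (h x), p (h y)} \<in> EF"
          using iso p_h by simp
        ultimately show "e \<in> pullback p"
          unfolding pullback_def by blast
      qed
    qed
    with \<open>p permutes VF\<close> show "D \<in> pullback ` {p. p permutes VF}"
      by blast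
  qed
  then have "card {D. simple_graph W D \<and> graph_iso W D VF EF} \<le> card (pullback ` {p. p permutes VF})"
    by (intro card_mono finite_imageI finite_permutations assms)
  also have "\<dots> \<le> card {p. p permutes VF}"
    by (intro card_image_le finite_permutations assms)
  also have "\<dots> = fact (card VF)"
    using card_permutations assms by blast
  finally show ?thesis .
next
  case False
  then have "{D. simple_graph W D \<and> graph_iso W D VF EF} = {}"
    by blast
  then show ?thesis
    by (metis card.empty le0)
qed

lemma card_copies_le:
  fixes VF :: "'b set" and Ws :: "'a set set" and C :: "('a set \<times> 'a set set) set"
  assumes "finite VF" "finite Ws"
    and "\<And>W D. (W, D) \<in> C \<Longrightarrow> W \<in> Ws \<and> simple_graph W D \<and> graph_iso W D VF EF"
  shows "card C \<le> card Ws * fact (card VF)"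
proof -
  define Ds where "Ds W = {D. simple_graph W D \<and> graph_iso W D VF EF}" for W :: "'a set"
  have "C \<subseteq> Sigma Ws Ds"
    using assms(3) unfolding Ds_def by fast
  moreover have "\<forall>W\<in>Ws. finite (Ds W)"
    unfolding Ds_def using finite_simple_graph_edge_sets by (auto intro: rev_finite_subset)
  ultimately have "card C \<le> card (Sigma Ws Ds)"
    using assms(2) by (intro card_mono finite_SigmaI) auto
  also have "\<dots> = (\<Sum>W\<in>Ws. card (Ds W))"
    using assms(2) \<open>\<forall>W\<in>Ws. finite (Ds W)\<close> by (rule card_SigmaI)
  also have "\<dots> \<le> (\<Sum>W\<in>Ws. fact (card VF))"
    unfolding Ds_def using card_iso_edge_sets_le_fact[OF assms(1)] by (rule sum_mono)
  finally show ?thesis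
    by simp
qed

theorem lemma6:
  fixes VF :: "'b set" and EF :: "'b set set" and n t l :: nat
  assumes "simple_graph VF EF"
    and "diameter VF EF = 2"
    and "n = card VF"
    and "t = min_degree VF EF"
    and "l > n"
  shows "F_degree VF EF (FF_V l) (FF_E l t) (2*l) \<le> fact n * ((l - 1) choose (n - t - 1))"
proof -
  have "finite VF"
    using assms(1) unfolding simple_graph_def by simp
  moreover have "VF \<noteq> {}"
    using diameter_ne_0_imp_nonempty[of VF EF] assms(2) by simp
  ultimately have "t < l"
    using min_degree_le_card assms(3-5) by (metis order.strict_trans1)
  have "diameter VF EF \<le> 2"
    using assms(2) by simp
  have "F_degree VF EF (FF_V l) (FF_E l t) (2*l) \<le> card (FF_vertex_sets l t (n - t - 1)) * fact n"
    unfolding F_degree_def assms(3)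
    using \<open>finite VF\<close> finite_FF_vertex_sets
  proof (rule card_copies_le)
    fix W D
    assume "(W, D) \<in> {(W, D). W \<subseteq> FF_V l \<and> D \<subseteq> FF_E l t \<and> (\<forall>e\<in>D. e \<subseteq> W) \<and> 2 * l \<in> W
      \<and> graph_iso W D VF EF}"
    then show "W \<in> FF_vertex_sets l t (card VF - t - 1) \<and> simple_graph W D \<and> graph_iso W D VF EF"
      using FF_copy_through_2l[OF \<open>finite VF\<close> \<open>diameter VF EF \<le> 2\<close> assms(4) \<open>t < l\<close>] by auto
  qed
  also have "\<dots> \<le> ((l - 1) choose (n - t - 1)) * fact n"
    using card_FF_vertex_sets_le by simp
  finally show ?thesis
    by (simp only: mult.commute)
qed

end
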